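(* For $i=1,\dots,d$ let $\{I_n^{(i)}\}_{n=1}^\infty$ be increasing sequences of symmetric integer intervals $I_n^{(i)}=[-a_n^{(i)};a_n^{(i)}]\subseteq\mathbb Z$. Then the sets $W_n=I_n^{(1)}\times\dots\times I_n^{(d)}\subseteq\mathbb Z^d$ form a $2^d$-incompressible sequence in $\mathbb Z^d$.
   Context: $[a;b]$ denotes $\{a,a+1,\dots,b\}$. In the additive group $\mathbb Z^d$, a sequence of translates $\{W_{n(i)}+f_i\}_{i=1}^I$ is incremental if $n(1)\ge\dots\ge n(I)$ and $f_i\notin\bigcup_{j<i}(W_{n(j)}+f_j)$. An increasing sequence $\{W_n\}$ of finite sets containing $0$ is $C$-incompressible if for every incremental sequence at most $C$ of the sets $W_{n(i)}+f_i$ contain $0$. *)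

theory Defs
  imports "HOL-Analysis.Analysis"
begin

text \<open>Sequences are indexed by positive naturals n = 1, 2, ...; the value W 0 is ignored.
  The translate W + f is written as the image of W under (\<lambda>w. w + f).\<close>

definition incremental ::
  "(nat \<Rightarrow> 'a::ab_group_add set) \<Rightarrow> nat \<Rightarrow> (nat \<Rightarrow> nat) \<Rightarrow> (nat \<Rightarrow> 'a) \<Rightarrow> bool" where
  "incremental W I n f \<longleftrightarrow>
     (\<forall>i\<in>{1..I}. 1 \<le> n i) \<and>
     (\<forall>i j. 1 \<le> i \<longrightarrow> i \<le> j \<longrightarrow> j \<le> I \<longrightarrow> n j \<le> n i) \<and>
     (\<forall>i\<in>{1..I}. f i \<notin> (\<Union>j\<in>{1..<i}. (\<lambda>w. w + f j) ` W (n j)))"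

definition incompressible :: "nat \<Rightarrow> (nat \<Rightarrow> 'a::ab_group_add set) \<Rightarrow> bool" where
  "incompressible C W \<longleftrightarrow>
     (\<forall>n\<ge>1. W n \<subseteq> W (Suc n)) \<and>
     (\<forall>n\<ge>1. finite (W n)) \<and>
     (\<forall>n\<ge>1. 0 \<in> W n) \<and>
     (\<forall>I n f. incremental W I n f \<longrightarrow>
        card {i\<in>{1..I}. 0 \<in> (\<lambda>w. w + f i) ` W (n i)} \<le> C)"

end

theory Submission
  imports Defs
begin

text \<open>Call \<open>i\<close> a hit if \<open>0 \<in> W(n i) + f i\<close>, i.e. \<open>-f i \<in> W(n i)\<close>, and label it by the orthant
  of \<open>-f i\<close> (the set of coordinates where it is positive), one of \<open>2^d\<close> labels. Two points in
  the same orthant of a symmetric box differ by a point of that box. So if hits \<open>i < j\<close> had the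
  same label, then, as \<open>W(n j) \<subseteq> W(n i)\<close>, we would get \<open>f j - f i \<in> W(n i)\<close>, contradicting
  incrementality. Hence distinct hits carry distinct labels.\<close>

lemma lift_Suc_mono_subset_from_one:
  fixes W :: "nat \<Rightarrow> 'a set"
  assumes "\<forall>m\<ge>1. W m \<subseteq> W (Suc m)" and "1 \<le> m" and "m \<le> m'"
  shows "W m \<subseteq> W m'"
  by (rule lift_Suc_mono_le_ivl[where N = "{1..}"]) (use assms in auto)

lemma card_incremental_hits_le:
  fixes W :: "nat \<Rightarrow> 'a::ab_group_add set" and label :: "'a \<Rightarrow> 'c::finite"
  assumes incr: "\<forall>m\<ge>1. W m \<subseteq> W (Suc m)"
    and label: "\<And>m x y. 1 \<le> m \<Longrightarrow> x \<in> W m \<Longrightarrow> y \<in> W m \<Longrightarrow> label x = label y \<Longrightarrow> x - y \<in> W m"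
    and inc: "incremental W I n f"
  shows "card {i\<in>{1..I}. 0 \<in> (\<lambda>w. w + f i) ` W (n i)} \<le> CARD('c)"
proof -
  define hits where "hits = {i\<in>{1..I}. 0 \<in> (\<lambda>w. w + f i) ` W (n i)}"
  have hit: "- f i \<in> W (n i)" if "i \<in> hits" for i
    using that by (auto simp: hits_def add_eq_0_iff)
  have "label (- f i) \<noteq> label (- f j)" if "i \<in> hits" "j \<in> hits" "i < j" for i j
  proof
    assume same: "label (- f i) = label (- f j)"
    have "1 \<le> i" "j \<le> I" using that by (auto simp: hits_def)
    then have "1 \<le> n j" "n j \<le> n i"
      and fresh: "f j \<notin> (\<lambda>w. w + f i) ` W (n i)"
      using inc \<open>i < j\<close> by (auto simp: incremental_def)
    then have "- f j \<in> W (n i)"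
      using lift_Suc_mono_subset_from_one[OF incr] hit[OF \<open>j \<in> hits\<close>] by blast
    then have "f j - f i \<in> W (n i)"
      using label[of "n i" "- f i" "- f j"] hit[OF \<open>i \<in> hits\<close>] same \<open>1 \<le> n j\<close> \<open>n j \<le> n i\<close>
      by simp
    then have "f j \<in> (\<lambda>w. w + f i) ` W (n i)"
      by (rule rev_image_eqI) simp
    with fresh show False ..
  qed
  then have "inj_on (\<lambda>i. label (- f i)) hits"
    by (intro linorder_inj_onI') auto
  then show ?thesis
    unfolding hits_def[symmetric] by (rule card_inj_on_le) auto
qed

lemma abs_diff_le_if_same_sign:
  fixes x y c :: "'a::linordered_idom"
  assumes "\<bar>x\<bar> \<le> c" "\<bar>y\<bar> \<le> c" "0 < x \<longleftrightarrow> 0 < y"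
  shows "\<bar>x - y\<bar> \<le> c"
  using assms by (auto simp: abs_le_iff)

definition centered_box :: "('d \<Rightarrow> 'a::linordered_idom) \<Rightarrow> ('a ^ 'd) set" where
  "centered_box b = {x. \<forall>i. \<bar>x $ i\<bar> \<le> b i}"

lemma centered_box_mono: "(\<And>i. b i \<le> c i) \<Longrightarrow> centered_box b \<subseteq> centered_box c"
  unfolding centered_box_def using order_trans by blast

lemma diff_mem_centered_box_same_orthant:
  assumes "x \<in> centered_box b" "y \<in> centered_box b"
    and "{k. 0 < x $ k} = {k. 0 < y $ k}"
  shows "x - y \<in> centered_box b"
  using assms abs_diff_le_if_same_sign[of "x $ k" "b k" "y $ k" for k]
  unfolding centered_box_def set_eq_iff by simp

lemma finite_vector:
  fixes B :: "'n::finite \<Rightarrow> 'a set"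
  assumes "\<And>i. finite (B i)"
  shows "finite {V. \<forall>i::'n. V $ i \<in> B i}"
proof (rule finite_imageD)
  show "inj_on vec_nth {V. \<forall>i. V $ i \<in> B i}"
    by (intro inj_onI) (simp add: vec_eq_iff)
  have "vec_nth ` {V. \<forall>i. V $ i \<in> B i} \<subseteq> Pi\<^sub>E UNIV B"
    by auto
  moreover have "finite (Pi\<^sub>E UNIV B)"
    using assms by (intro finite_PiE) auto
  ultimately show "finite (vec_nth ` {V. \<forall>i. V $ i \<in> B i})"
    by (rule finite_subset)
qed

lemma finite_centered_box: "finite (centered_box (b :: 'd::finite \<Rightarrow> int))"
proof -
  have "centered_box b = {x. \<forall>i. x $ i \<in> {- b i..b i}}"
    by (auto simp: centered_box_def abs_le_iff minus_le_iff)
  then show ?thesis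
    using finite_vector[of "\<lambda>i. {- b i..b i}"] by simp
qed

theorem proposition2p5:
  fixes a :: "'d::finite \<Rightarrow> nat \<Rightarrow> nat"
  assumes "\<And>i n. 1 \<le> n \<Longrightarrow> a i n \<le> a i (Suc n)"
  shows "incompressible (2 ^ CARD('d))
           (\<lambda>n. {x :: int ^ 'd. \<forall>i. \<bar>x $ i\<bar> \<le> int (a i n)})"
proof -
  define W where "W = (\<lambda>n. centered_box (\<lambda>i. int (a i n)))"
  have incr: "\<forall>n\<ge>1. W n \<subseteq> W (Suc n)"
    using assms by (auto simp: W_def intro!: centered_box_mono)
  have "card {i\<in>{1..I}. 0 \<in> (\<lambda>w. w + f i) ` W (n i)} \<le> 2 ^ CARD('d)"
    if "incremental W I n f" for I n f
  proof -
    have "card {i\<in>{1..I}. 0 \<in> (\<lambda>w. w + f i) ` W (n i)} \<le> CARD('d set)"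
      by (rule card_incremental_hits_le[OF incr _ that, where label = "\<lambda>x. {k. 0 < x $ k}"])
        (simp add: W_def diff_mem_centered_box_same_orthant)
    also have "CARD('d set) = 2 ^ CARD('d)"
      using card_Pow[of "UNIV :: 'd set"] by simp
    finally show ?thesis .
  qed
  moreover have "finite (W n)" for n
    by (simp add: W_def finite_centered_box)
  moreover have "0 \<in> W n" for n
    by (simp add: W_def centered_box_def)
  ultimately have "incompressible (2 ^ CARD('d)) W"
    using incr by (simp add: incompressible_def)
  then show ?thesis
    unfolding W_def centered_box_def .
qed

end
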